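(* Let $\mathfrak{g}$ be a Leibniz algebra and consider a commutative diagram of Leibniz algebras with exact rows $$\begin{array}{ccccccccc}0\to&\mathfrak{m}_1&\to&\mathfrak{p}_1&\to&\mathfrak{g}&\to0\\ &\downarrow\alpha&&\downarrow\beta&&\downarrow\gamma&\\ 0\to&\mathfrak{m}_2&\to&\mathfrak{p}_2&\to&\mathfrak{g}&\to0\end{array}$$ such that the bottom row is a $\mathrm{Lie}$-stem extension. If $\gamma$ is surjective, then $\beta$ is surjective.
   Context: Fix a field $\mathbb{K}$ with $\frac12\in\mathbb{K}$. A Leibniz algebra is a $\mathbb{K}$-vector space with a bilinear bracket satisfying $[x,[y,z]]=[[x,y],z]-[[x,z],y]$. $\mathfrak{p}^{\mathrm{ann}}$ is the span of all $[x,x]$, $\mathfrak{p}_{\mathrm{Lie}}=\mathfrak{p}/\mathfrak{p}^{\mathrm{ann}}$. $Z_{\mathrm{Lie}}(\mathfrak{p})=\{z:[x,z]+[z,x]=0\ \forall x\}$. An extension $0\to\mathfrak{m}\to\mathfrak{p}\to\mathfrak{g}\to0$ is a $\mathrm{Lie}$-stem extension if $\mathfrak{m}\subseteq Z_{\mathrm{Lie}}(\mathfrak{p})$ and the induced map $\mathfrak{p}_{\mathrm{Lie}}\to\mathfrak{g}_{\mathrm{Lie}}$ is an isomorphism (equivalently, $\mathfrak{m}\subseteq Z_{\mathrm{Lie}}(\mathfrak{p})\cap\mathfrak{p}^{\mathrm{ann}}$). *)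

theory Defs
  imports Complex_Main
begin

definition leibniz_algebra ::
  "('k::field \<Rightarrow> 'v::ab_group_add \<Rightarrow> 'v) \<Rightarrow> ('v \<Rightarrow> 'v \<Rightarrow> 'v) \<Rightarrow> bool" where
  "leibniz_algebra sc br \<longleftrightarrow>
     module sc \<and>
     (\<forall>x y z. br (x + y) z = br x z + br y z) \<and>
     (\<forall>x y z. br x (y + z) = br x y + br x z) \<and>
     (\<forall>c x y. br (sc c x) y = sc c (br x y)) \<and>
     (\<forall>c x y. br x (sc c y) = sc c (br x y)) \<and>
     (\<forall>x y z. br x (br y z) = br (br x y) z - br (br x z) y)"

definition leibniz_hom ::
  "('k::field \<Rightarrow> 'v::ab_group_add \<Rightarrow> 'v) \<Rightarrow> ('v \<Rightarrow> 'v \<Rightarrow> 'v) \<Rightarrow>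
   ('k \<Rightarrow> 'w::ab_group_add \<Rightarrow> 'w) \<Rightarrow> ('w \<Rightarrow> 'w \<Rightarrow> 'w) \<Rightarrow> ('v \<Rightarrow> 'w) \<Rightarrow> bool" where
  "leibniz_hom sc1 br1 sc2 br2 f \<longleftrightarrow>
     (\<forall>x y. f (x + y) = f x + f y) \<and>
     (\<forall>c x. f (sc1 c x) = sc2 c (f x)) \<and>
     (\<forall>x y. f (br1 x y) = br2 (f x) (f y))"

definition short_exact ::
  "('m::ab_group_add \<Rightarrow> 'p::ab_group_add) \<Rightarrow> ('p \<Rightarrow> 'g::ab_group_add) \<Rightarrow> bool" where
  "short_exact i q \<longleftrightarrow> inj i \<and> surj q \<and> range i = {x. q x = 0}"

definition lie_center :: "('v::ab_group_add \<Rightarrow> 'v \<Rightarrow> 'v) \<Rightarrow> 'v set" where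
  "lie_center br = {z. \<forall>x. br x z + br z x = 0}"

definition leib_ann ::
  "('k::field \<Rightarrow> 'v::ab_group_add \<Rightarrow> 'v) \<Rightarrow> ('v \<Rightarrow> 'v \<Rightarrow> 'v) \<Rightarrow> 'v set" where
  "leib_ann sc br = module.span sc (range (\<lambda>x. br x x))"

text \<open>Lie-stem extension (in the equivalent form m \<subseteq> Z_Lie(p) \<inter> p^ann).\<close>
definition lie_stem_extension ::
  "('k::field \<Rightarrow> 'p::ab_group_add \<Rightarrow> 'p) \<Rightarrow> ('p \<Rightarrow> 'p \<Rightarrow> 'p) \<Rightarrow>
   ('m::ab_group_add \<Rightarrow> 'p) \<Rightarrow> ('p \<Rightarrow> 'g::ab_group_add) \<Rightarrow> bool" where
  "lie_stem_extension sc br i q \<longleftrightarrow>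
     short_exact i q \<and> range i \<subseteq> lie_center br \<inter> leib_ann sc br"

end

theory Submission
  imports Defs
begin

text \<open>A diagram chase shows that every y in p2 has the form \<open>\<beta> a + m\<close> with m in m2.
  Since m is Lie-central and 2 is invertible, \<open>[m,m] = 0\<close> and the cross terms cancel,
  so \<open>[y,y] = [\<beta> a, \<beta> a] = \<beta> [a,a]\<close>. Hence the subspace \<open>range \<beta>\<close> contains all squares,
  so it contains p2^ann, which contains m2 for a Lie-stem extension; thus \<open>\<beta>\<close> is onto.\<close>

lemma leibniz_hom_additive: "leibniz_hom sc1 br1 sc2 br2 f \<Longrightarrow> additive f"
  by (simp add: leibniz_hom_def additive_def)

lemma leibniz_hom_range_subspace:
  assumes "module sc2" and "leibniz_hom sc1 br1 sc2 br2 f"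
  shows "module.subspace sc2 (range f)"
proof (rule module.subspaceI[OF assms(1)])
  show "0 \<in> range f"
    using additive.zero[OF leibniz_hom_additive[OF assms(2)]] by (metis rangeI)
  show "x + y \<in> range f" if xy: "x \<in> range f" "y \<in> range f" for x y
  proof -
    obtain a b where "x = f a" "y = f b"
      using xy by blast
    then have "x + y = f (a + b)"
      using assms(2) by (simp add: leibniz_hom_def)
    then show ?thesis by simp
  qed
  show "sc2 c x \<in> range f" if x: "x \<in> range f" for c x
  proof -
    obtain a where "x = f a"
      using x by blast
    then have "sc2 c x = f (sc1 c a)"
      using assms(2) by (simp add: leibniz_hom_def)
    then show ?thesis by simp
  qed
qed

lemma leib_ann_subset_hom_range:
  assumes "leibniz_algebra sc2 br2" and "leibniz_hom sc1 br1 sc2 br2 f"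
    and "\<And>y. br2 y y \<in> range f"
  shows "leib_ann sc2 br2 \<subseteq> range f"
proof -
  have "module sc2"
    using assms(1) unfolding leibniz_algebra_def by simp
  then show ?thesis
    unfolding leib_ann_def using assms(3)
    by (intro module.span_minimal leibniz_hom_range_subspace[OF _ assms(2)]) auto
qed

lemma module_double_eq_zero:
  fixes sc :: "'k::field \<Rightarrow> 'v::ab_group_add \<Rightarrow> 'v" and v :: 'v
  assumes "module sc" and "(2::'k) \<noteq> 0" and "v + v = 0"
  shows "v = 0"
proof -
  have "(1::'k) = 1/2 + 1/2"
    using assms(2) by (simp add: field_simps)
  then have "v = sc (1/2 + 1/2) v"
    using module.scale_one[OF assms(1)] by metis
  also have "\<dots> = sc (1/2) (v + v)"
    by (simp only: module.scale_left_distrib[OF assms(1)] module.scale_right_distrib[OF assms(1)])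
  finally show "v = 0"
    using assms(3) module.scale_zero_right[OF assms(1)] by simp
qed

lemma leibniz_square_add_lie_center:
  fixes sc :: "'k::field \<Rightarrow> 'v::ab_group_add \<Rightarrow> 'v"
  assumes L: "leibniz_algebra sc br" and "(2::'k) \<noteq> 0" and z: "z \<in> lie_center br"
  shows "br (x + z) (x + z) = br x x"
proof -
  have add_left: "\<And>x y w. br (x + y) w = br x w + br y w"
    and add_right: "\<And>x y w. br x (y + w) = br x y + br x w"
    and "module sc"
    using L unfolding leibniz_algebra_def by auto
  have cross: "br x z + br z x = 0" and "br z z + br z z = 0"
    using z unfolding lie_center_def by auto
  then have zz: "br z z = 0"
    using module_double_eq_zero[OF \<open>module sc\<close> assms(2)] by blast
  have "br (x + z) (x + z) = br x x + (br x z + br z x) + br z z"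
    by (simp add: add_left add_right algebra_simps)
  then show ?thesis
    using cross zz by simp
qed

lemma diagram_chase_decompose:
  assumes "short_exact i2 q2" and "additive q2"
    and "q2 \<circ> \<beta> = \<gamma> \<circ> q1" and "surj q1" and "surj \<gamma>"
  shows "\<exists>a m. y = \<beta> a + i2 m"
proof -
  obtain a where a: "q2 y = \<gamma> (q1 a)"
    using assms(4,5) by (metis surjD)
  have "q2 (y - \<beta> a) = 0"
    using a assms(3) additive.diff[OF assms(2)] by (metis comp_apply diff_self)
  then obtain m where "y - \<beta> a = i2 m"
    using assms(1) unfolding short_exact_def by blast
  then have "y = \<beta> a + i2 m"
    by (simp add: algebra_simps)
  then show ?thesis
    by blast
qed

theorem mainTheorem15:
  fixes scm1 :: "'k::field \<Rightarrow> 'm1::ab_group_add \<Rightarrow> 'm1" and brm1 :: "'m1 \<Rightarrow> 'm1 \<Rightarrow> 'm1"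
    and scp1 :: "'k \<Rightarrow> 'p1::ab_group_add \<Rightarrow> 'p1" and brp1 :: "'p1 \<Rightarrow> 'p1 \<Rightarrow> 'p1"
    and scm2 :: "'k \<Rightarrow> 'm2::ab_group_add \<Rightarrow> 'm2" and brm2 :: "'m2 \<Rightarrow> 'm2 \<Rightarrow> 'm2"
    and scp2 :: "'k \<Rightarrow> 'p2::ab_group_add \<Rightarrow> 'p2" and brp2 :: "'p2 \<Rightarrow> 'p2 \<Rightarrow> 'p2"
    and scg :: "'k \<Rightarrow> 'g::ab_group_add \<Rightarrow> 'g" and brg :: "'g \<Rightarrow> 'g \<Rightarrow> 'g"
    and i1 :: "'m1 \<Rightarrow> 'p1" and q1 :: "'p1 \<Rightarrow> 'g"
    and i2 :: "'m2 \<Rightarrow> 'p2" and q2 :: "'p2 \<Rightarrow> 'g"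
    and \<alpha> :: "'m1 \<Rightarrow> 'm2" and \<beta> :: "'p1 \<Rightarrow> 'p2" and \<gamma> :: "'g \<Rightarrow> 'g"
  assumes char: "(2::'k) \<noteq> 0"
    and L: "leibniz_algebra scm1 brm1" "leibniz_algebra scp1 brp1"
      "leibniz_algebra scm2 brm2" "leibniz_algebra scp2 brp2" "leibniz_algebra scg brg"
    and H: "leibniz_hom scm1 brm1 scp1 brp1 i1" "leibniz_hom scp1 brp1 scg brg q1"
      "leibniz_hom scm2 brm2 scp2 brp2 i2" "leibniz_hom scp2 brp2 scg brg q2"
      "leibniz_hom scm1 brm1 scm2 brm2 \<alpha>" "leibniz_hom scp1 brp1 scp2 brp2 \<beta>"
      "leibniz_hom scg brg scg brg \<gamma>"
    and top_exact: "short_exact i1 q1"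
    and bottom_stem: "lie_stem_extension scp2 brp2 i2 q2"
    and comm1: "\<beta> \<circ> i1 = i2 \<circ> \<alpha>"
    and comm2: "q2 \<circ> \<beta> = \<gamma> \<circ> q1"
    and gamma_surj: "surj \<gamma>"
  shows "surj \<beta>"
proof -
  have exact2: "short_exact i2 q2" and stem: "range i2 \<subseteq> lie_center brp2 \<inter> leib_ann scp2 brp2"
    using bottom_stem unfolding lie_stem_extension_def by auto
  have decompose: "\<exists>a m. y = \<beta> a + i2 m" for y
    using diagram_chase_decompose[OF exact2 leibniz_hom_additive[OF H(4)] comm2 _ gamma_surj]
      top_exact unfolding short_exact_def by blast
  have "brp2 y y \<in> range \<beta>" for y
  proof -
    obtain a m where y: "y = \<beta> a + i2 m"
      using decompose by blast
    have "brp2 y y = brp2 (\<beta> a) (\<beta> a)"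
      unfolding y using leibniz_square_add_lie_center[OF L(4) char] stem by blast
    also have "\<dots> = \<beta> (brp1 a a)"
      using H(6) unfolding leibniz_hom_def by simp
    finally show ?thesis by simp
  qed
  then have "range i2 \<subseteq> range \<beta>"
    using leib_ann_subset_hom_range[OF L(4) H(6)] stem by blast
  show ?thesis
    unfolding surj_def
  proof
    fix y
    obtain a m where y: "y = \<beta> a + i2 m"
      using decompose by blast
    obtain c where "i2 m = \<beta> c"
      using \<open>range i2 \<subseteq> range \<beta>\<close> by blast
    then have "y = \<beta> (a + c)"
      using y additive.add[OF leibniz_hom_additive[OF H(6)]] by simp
    then show "\<exists>x. y = \<beta> x" ..
  qed
qed

end
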